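(* There exists an infinite set $A\subseteq \mathbb{R}^{2}$ with the following two properties: (1) for every positive integer $n$ and every subset $P\subseteq A$ consisting of $n$ points, there exists a subset $P'\subseteq P$ with $|P'|\ge n/2$ such that no three points of $P'$ are collinear; (2) there is no partition $A = A_1\cup\cdots\cup A_m$ of $A$ into finitely many sets such that, for each $i$, no three points of $A_i$ are collinear. *)

theory Defs
  imports "HOL-Analysis.Analysis"
begin

definition no_three_collinear :: "(real^2) set \<Rightarrow> bool" where
  "no_three_collinear S \<longleftrightarrow>
     (\<forall>x\<in>S. \<forall>y\<in>S. \<forall>z\<in>S. x \<noteq> y \<and> y \<noteq> z \<and> x \<noteq> z \<longrightarrow> \<not> collinear {x, y, z})"

end

theory Submission
  imports Defs "HOL-Computational_Algebra.Polynomial" "HOL-Library.Ramsey"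
begin

text \<open>
  Attach to the edge {i, j} of the complete graph on the naturals the point
  (t i + t j, t i^2 + t i * t j + t j^2) for a sequence t of reals. For every c, the point
  (a + b, a^2 + a b + b^2) lies on the line y = (a + b + c) x - (a b + b c + c a), so the points
  of the three edges of a triangle are always collinear. Choosing the values t n one after the
  other, each time avoiding the finitely many roots of the nonzero polynomials (of degree at most
  two in t n) that express collinearity of a non-triangle triple of edges, makes triangles the
  only collinear triples. A finite set of points is then a set of edges: a cut of the graph that
  keeps at least half of them contains no triangle, which gives the first property, and by
  Ramsey's theorem every finite colouring of the edges has a monochromatic triangle, which
  refutes the second.
\<close>

lemma collinear_0_iff_cross_eq_0:
  fixes u v :: "real^2"
  shows "collinear {0, u, v} \<longleftrightarrow> u$1 * v$2 = u$2 * v$1"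
proof
  assume "collinear {0, u, v}"
  then have "u = 0 \<or> v = 0 \<or> (\<exists>c. v = c *\<^sub>R u)"
    by (simp add: collinear_lemma)
  then show "u$1 * v$2 = u$2 * v$1"
    by auto
next
  assume cross: "u$1 * v$2 = u$2 * v$1"
  have "u = 0 \<or> u$1 \<noteq> 0 \<or> u$2 \<noteq> 0"
    by (auto simp: vec_eq_iff forall_2)
  moreover have "v = (v$1 / u$1) *\<^sub>R u" if "u$1 \<noteq> 0"
    using that cross by (auto simp: vec_eq_iff forall_2 field_simps)
  moreover have "v = (v$2 / u$2) *\<^sub>R u" if "u$2 \<noteq> 0"
    using that cross by (auto simp: vec_eq_iff forall_2 field_simps)
  ultimately show "collinear {0, u, v}"
    by (metis collinear_lemma)
qed

lemma collinear_3_iff_cross_eq_0: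
  fixes x y z :: "real^2"
  shows "collinear {x, y, z} \<longleftrightarrow> (y$1 - x$1) * (z$2 - x$2) = (y$2 - x$2) * (z$1 - x$1)"
proof -
  have "collinear {x, y, z} \<longleftrightarrow> collinear {0, y - x, z - x}"
    using collinear_3[of y x z] by (simp add: insert_commute)
  then show ?thesis
    by (simp add: collinear_0_iff_cross_eq_0)
qed

lemma finite_quadratic_roots:
  fixes c0 c1 c2 :: "'a::idom"
  assumes "c2 \<noteq> 0 \<or> c1 \<noteq> 0 \<or> c0 \<noteq> 0"
  shows "finite {x. c2 * x^2 + c1 * x + c0 = 0}"
proof -
  have "[:c0, c1, c2:] \<noteq> 0"
    using assms by auto
  then have "finite {x. poly [:c0, c1, c2:] x = 0}"
    by (rule poly_roots_finite)
  then show ?thesis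
    by (simp add: algebra_simps power2_eq_square)
qed

section \<open>Large cuts\<close>

definition cut_edges :: "'a set \<Rightarrow> ('a \<times> 'a) set \<Rightarrow> ('a \<times> 'a) set" where
  "cut_edges S E = {e \<in> E. (fst e \<in> S) \<noteq> (snd e \<in> S)}"

lemma card_cut_edges_Un:
  assumes "finite A" "finite B" "A \<inter> B = {}"
  shows "card (cut_edges S (A \<union> B)) = card (cut_edges S A) + card (cut_edges S B)"
proof -
  have "cut_edges S (A \<union> B) = cut_edges S A \<union> cut_edges S B"
    by (auto simp: cut_edges_def)
  then show ?thesis
    using assms by (simp add: card_Un_disjoint cut_edges_def disjoint_iff)
qed

lemma card_cut_edges_toggle:
  assumes "finite E" and "\<forall>e\<in>E. (fst e = v) \<noteq> (snd e = v)"
  shows "card (cut_edges (S - {v}) E) + card (cut_edges (insert v S) E) = card E"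
proof -
  have "cut_edges (insert v S) E = E - cut_edges (S - {v}) E"
    using assms(2) by (auto simp: cut_edges_def)
  then show ?thesis
    using assms(1) by (simp add: card_Diff_subset card_mono cut_edges_def)
qed

text \<open>Greedy construction: moving the new vertex v across the cut toggles exactly the edges at v,
  so one of its two placements cuts at least half of them.\<close>
lemma large_cut_within:
  assumes "finite V" and "E \<subseteq> V \<times> V" and "\<forall>e\<in>E. fst e \<noteq> snd e"
  shows "\<exists>S. card E \<le> 2 * card (cut_edges S E)"
  using assms
proof (induction V arbitrary: E rule: finite_induct)
  case empty
  then show ?case
    by simp
next
  case (insert v V)
  define E0 where "E0 = {e \<in> E. fst e \<noteq> v \<and> snd e \<noteq> v}"
  define Ev where "Ev = E - E0"
  have E: "E = E0 \<union> Ev" "E0 \<inter> Ev = {}"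
    by (auto simp: E0_def Ev_def)
  have fin: "finite E0" "finite Ev"
    using insert.prems(1) insert.hyps(1) by (auto simp: E0_def Ev_def intro: finite_subset)
  have "E0 \<subseteq> V \<times> V"
    using insert.prems(1) by (auto simp: E0_def)
  then obtain S where S: "card E0 \<le> 2 * card (cut_edges S E0)"
    using insert.IH[of E0] insert.prems(2) by (auto simp: E0_def)
  have "cut_edges (S - {v}) E0 = cut_edges S E0" "cut_edges (insert v S) E0 = cut_edges S E0"
    by (auto simp: cut_edges_def E0_def)
  moreover have "card (cut_edges (S - {v}) Ev) + card (cut_edges (insert v S) Ev) = card Ev"
    using fin(2) insert.prems(2) by (intro card_cut_edges_toggle) (auto simp: E0_def Ev_def)
  ultimately have "card E \<le> card (cut_edges (S - {v}) E) + card (cut_edges (insert v S) E)"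
    using S fin by (simp add: E card_cut_edges_Un card_Un_disjoint)
  then have "card E \<le> 2 * card (cut_edges (S - {v}) E) \<or> card E \<le> 2 * card (cut_edges (insert v S) E)"
    by linarith
  then show ?case
    by blast
qed

lemma large_cut:
  assumes "finite E" and "\<forall>e\<in>E. fst e \<noteq> snd e"
  shows "\<exists>S. card E \<le> 2 * card (cut_edges S E)"
proof (rule large_cut_within)
  show "E \<subseteq> (fst ` E \<union> snd ` E) \<times> (fst ` E \<union> snd ` E)"
    by (auto intro: rev_image_eqI)
qed (use assms in auto)

section \<open>The point of a pair of reals\<close>

definition pair_point :: "real \<Rightarrow> real \<Rightarrow> real^2" where
  "pair_point a b = vector [a + b, a*a + a*b + b*b]"

lemma pair_point_nth [simp]:
  "pair_point a b $ 1 = a + b"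
  "pair_point a b $ 2 = a*a + a*b + b*b"
  by (simp_all add: pair_point_def)

lemma pair_point_commute: "pair_point a b = pair_point b a"
  by (simp add: vec_eq_iff forall_2 algebra_simps)

lemma pair_point_eq_iff:
  "pair_point a b = pair_point c d \<longleftrightarrow> a = c \<and> b = d \<or> a = d \<and> b = c"
proof
  assume "pair_point a b = pair_point c d"
  then have sum: "a + b = c + d" and "a*a + a*b + b*b = c*c + c*d + d*d"
    by (metis pair_point_nth)+
  moreover from sum have "b = c + d - a"
    by simp
  ultimately have "(a - c) * (a - d) = 0"
    by (simp add: algebra_simps)
  then show "a = c \<and> b = d \<or> a = d \<and> b = c"
    using sum by auto
qed (auto simp: pair_point_commute)

lemma collinear_pair_point_triangle:
  "collinear {pair_point a b, pair_point b c, pair_point a c}"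
  by (simp add: collinear_3_iff_cross_eq_0 algebra_simps)

lemma finite_collinear_pair_point_1:
  assumes "y \<noteq> z"
  shows "finite {x. collinear {pair_point x a, y, z}}"
proof -
  define c2 where "c2 = z$1 - y$1"
  define c1 where "c1 = a * (z$1 - y$1) - (z$2 - y$2)"
  define c0 where "c0 = (z$1 - y$1) * (a*a - y$2) - (z$2 - y$2) * (a - y$1)"
  have "collinear {pair_point x a, y, z} \<longleftrightarrow> c2 * x^2 + c1 * x + c0 = 0" for x
    using collinear_3_iff_cross_eq_0[of y z "pair_point x a"]
    by (simp add: insert_commute c2_def c1_def c0_def algebra_simps power2_eq_square)
  moreover have "finite {x. c2 * x^2 + c1 * x + c0 = 0}"
    by (rule finite_quadratic_roots) (use assms in \<open>auto simp: vec_eq_iff forall_2 c2_def c1_def\<close>)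
  ultimately show ?thesis
    by simp
qed

lemma finite_collinear_pair_point_2:
  assumes "a \<noteq> b" and "z \<noteq> pair_point a b"
  shows "finite {x. collinear {pair_point x a, pair_point x b, z}}"
proof -
  define c1 where "c1 = (b - a) * (a + b - z$1)"
  define c0 where "c0 = (b - a) * (z$2 - (a + b) * z$1 + a*b)"
  have "collinear {pair_point x a, pair_point x b, z} \<longleftrightarrow> 0 * x^2 + c1 * x + c0 = 0" for x
    by (simp add: collinear_3_iff_cross_eq_0 c1_def c0_def algebra_simps power2_eq_square)
  moreover have "c1 \<noteq> 0 \<or> c0 \<noteq> 0"
  proof (rule ccontr)
    assume "\<not> (c1 \<noteq> 0 \<or> c0 \<noteq> 0)"
    then have "z$1 = a + b" "z$2 = (a + b) * z$1 - a*b"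
      using assms(1) by (simp_all add: c1_def c0_def)
    then have "z = pair_point a b"
      by (simp add: vec_eq_iff forall_2 algebra_simps)
    then show False
      using assms(2) by simp
  qed
  then have "finite {x. 0 * x^2 + c1 * x + c0 = 0}"
    by (intro finite_quadratic_roots) simp
  ultimately show ?thesis
    by simp
qed

lemma not_collinear_pair_point_3:
  assumes "a \<noteq> b" "a \<noteq> c" "b \<noteq> c"
  shows "\<not> collinear {pair_point x a, pair_point x b, pair_point x c}"
proof -
  have "(b - a) * (c - a) * (c - b) \<noteq> 0"
    using assms by simp
  then show ?thesis
    by (simp add: collinear_3_iff_cross_eq_0 algebra_simps)
qed

section \<open>Generic sequences\<close>

lemma sequence_by_extension:
  fixes P :: "nat \<Rightarrow> (nat \<Rightarrow> 'a) \<Rightarrow> bool"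
  assumes local: "\<And>n s t. P n s \<Longrightarrow> (\<And>k. k < n \<Longrightarrow> t k = s k) \<Longrightarrow> P n t"
    and base: "P 0 s0"
    and step: "\<And>n s. P n s \<Longrightarrow> \<exists>x. P (Suc n) (s(n := x))"
  shows "\<exists>t. \<forall>n. P n t"
proof -
  have "\<exists>f. \<forall>n. P n (f n) \<and> (\<forall>k<n. f (Suc n) k = f n k)"
  proof (rule dependent_nat_choice)
    show "\<exists>s. P 0 s"
      using base by blast
  next
    fix s n
    assume "P n s"
    then obtain x where "P (Suc n) (s(n := x))"
      using step by blast
    then show "\<exists>s'. P (Suc n) s' \<and> (\<forall>k<n. s' k = s k)"
      by auto
  qed
  then obtain f where f: "\<And>n. P n (f n)" and agree: "\<And>n k. k < n \<Longrightarrow> f (Suc n) k = f n k"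
    by blast
  have stable: "f n k = f (Suc k) k" if "k < n" for n k
    using that by (induction n) (auto simp: agree less_Suc_eq)
  have "P n (\<lambda>k. f (Suc k) k)" for n
    by (rule local[OF f]) (erule stable[symmetric])
  then show ?thesis
    by blast
qed

text \<open>The edge {a, b} of the complete graph on the naturals is encoded as the pair (a, b) with a < b.\<close>
definition edges :: "nat \<Rightarrow> (nat \<times> nat) set" where
  "edges n = {(a, b). a < b \<and> b < n}"

definition triangle_edges :: "(nat \<times> nat) set \<Rightarrow> bool" where
  "triangle_edges F \<longleftrightarrow> (\<exists>x y z. x < y \<and> y < z \<and> F = {(x, y), (y, z), (x, z)})"

lemma triangle_edgesI: "x < y \<Longrightarrow> y < z \<Longrightarrow> F = {(x, y), (y, z), (x, z)} \<Longrightarrow> triangle_edges F"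
  unfolding triangle_edges_def by blast

lemma triangle_edges_not_subset_cut: "triangle_edges F \<Longrightarrow> \<not> F \<subseteq> cut_edges S E"
  by (auto simp: triangle_edges_def cut_edges_def)

definition edge_point :: "(nat \<Rightarrow> real) \<Rightarrow> nat \<times> nat \<Rightarrow> real^2" where
  "edge_point t e = pair_point (t (fst e)) (t (snd e))"

lemma finite_edges: "finite (edges n)"
  by (rule finite_subset[of _ "{..<n} \<times> {..<n}"]) (auto simp: edges_def)

lemma inj_on_edge_point:
  assumes "inj_on t V"
  shows "inj_on (edge_point t) {(a, b). a < b \<and> a \<in> V \<and> b \<in> V}"
proof (rule inj_onI, clarify)
  fix a b c d
  assume "edge_point t (a, b) = edge_point t (c, d)" "a < b" "c < d" "a \<in> V" "b \<in> V" "c \<in> V" "d \<in> V"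
  then show "a = c \<and> b = d"
    using assms by (auto simp: edge_point_def pair_point_eq_iff inj_on_eq_iff)
qed

lemma inj_on_edge_point_edges: "inj_on t {..<n} \<Longrightarrow> inj_on (edge_point t) (edges n)"
  by (rule inj_on_subset[OF inj_on_edge_point]) (auto simp: edges_def)

lemma edges_Suc_split:
  assumes "F \<subseteq> edges (Suc n)"
  shows "F = (\<lambda>a. (a, n)) ` {a. (a, n) \<in> F} \<union> (F \<inter> edges n)"
  using assms by (auto simp: edges_def less_Suc_eq)

lemma card_edges_Suc_split:
  assumes "F \<subseteq> edges (Suc n)"
  shows "card F = card {a. (a, n) \<in> F} + card (F \<inter> edges n)"
proof -
  have "finite {a. (a, n) \<in> F}"
    using assms by (auto simp: edges_def intro: finite_subset[of _ "{..<n}"])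
  moreover have "finite (F \<inter> edges n)"
    by (simp add: finite_edges)
  moreover have "(\<lambda>a. (a, n)) ` {a. (a, n) \<in> F} \<inter> (F \<inter> edges n) = {}"
    by (auto simp: edges_def)
  ultimately show ?thesis
    by (subst edges_Suc_split[OF assms]) (simp add: card_Un_disjoint card_image inj_on_def)
qed

lemma edge_point_fun_upd_image:
  assumes "F \<subseteq> edges (Suc n)"
  shows "edge_point (t(n := x)) ` F =
    (\<lambda>a. pair_point x (t a)) ` {a. (a, n) \<in> F} \<union> edge_point t ` (F \<inter> edges n)"
proof -
  have "edge_point (t(n := x)) (a, n) = pair_point x (t a)" if "(a, n) \<in> F" for a
    using that assms by (auto simp: edge_point_def edges_def pair_point_commute)
  moreover have "edge_point (t(n := x)) e = edge_point t e" if "e \<in> edges n" for e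
    using that by (auto simp: edge_point_def edges_def)
  ultimately show ?thesis
    by (subst edges_Suc_split[OF assms]) (auto simp: image_Un image_image intro!: image_cong)
qed

definition generic :: "nat \<Rightarrow> (nat \<Rightarrow> real) \<Rightarrow> bool" where
  "generic n t \<longleftrightarrow> inj_on t {..<n} \<and>
     (\<forall>F \<subseteq> edges n. card F = 3 \<and> collinear (edge_point t ` F) \<longrightarrow> triangle_edges F)"

lemma generic_cong:
  assumes "generic n s" and "\<And>k. k < n \<Longrightarrow> t k = s k"
  shows "generic n t"
proof -
  have "edge_point t e = edge_point s e" if "e \<in> edges n" for e
    using that assms(2) by (auto simp: edge_point_def edges_def)
  then have "edge_point t ` F = edge_point s ` F" if "F \<subseteq> edges n" for F
    using that by (auto intro!: image_cong)
  moreover have "inj_on t {..<n} = inj_on s {..<n}"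
    using assms(2) by (intro inj_on_cong) simp
  ultimately show ?thesis
    using assms(1) by (simp add: generic_def)
qed

lemma generic_0: "generic 0 t"
  by (simp add: generic_def edges_def)

lemma finite_collinear_two_new_edges:
  assumes "inj_on t {..<n}" and "a < n" "c < n" "a \<noteq> c" and "e \<in> edges n"
    and "\<not> triangle_edges {(a, n), (c, n), e}"
  shows "finite {x. collinear {pair_point x (t a), pair_point x (t c), edge_point t e}}"
proof (rule finite_collinear_pair_point_2)
  show "t a \<noteq> t c"
    using assms(1-4) by (auto simp: inj_on_eq_iff)
  show "edge_point t e \<noteq> pair_point (t a) (t c)"
  proof
    assume "edge_point t e = pair_point (t a) (t c)"
    then have "e = (a, c) \<or> e = (c, a)"
      using assms(1-3,5) by (auto simp: edge_point_def pair_point_eq_iff inj_on_eq_iff prod_eq_iff edges_def)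
    then have "triangle_edges {(a, n), (c, n), e}"
      using assms(5) by (auto simp: edges_def insert_commute intro!: triangle_edgesI)
    then show False
      using assms(6) by simp
  qed
qed

text \<open>Only the edges of F at the new vertex n depend on x, the edge (a, n) giving pair_point x (t a);
  the cases of none, one, two or three such edges are settled by genericity of t and by the
  three lemmas on pair_point.\<close>
lemma finite_collinear_extensions:
  assumes gen: "generic n t" and F: "F \<subseteq> edges (Suc n)" "card F = 3" "\<not> triangle_edges F"
  shows "finite {x. collinear (edge_point (t(n := x)) ` F)}"
proof -
  define L where "L = {a. (a, n) \<in> F}"
  define G where "G = F \<inter> edges n"
  have F_eq: "F = (\<lambda>a. (a, n)) ` L \<union> G"
    using edges_Suc_split[OF F(1)] by (simp add: L_def G_def)
  have points: "edge_point (t(n := x)) ` F = (\<lambda>a. pair_point x (t a)) ` L \<union> edge_point t ` G" for x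
    using edge_point_fun_upd_image[OF F(1)] by (simp add: L_def G_def)
  have card: "card L + card G = 3"
    using card_edges_Suc_split[OF F(1)] F(2) by (simp add: L_def G_def)
  have L: "L \<subseteq> {..<n}"
    using F(1) by (auto simp: L_def edges_def)
  have G: "G \<subseteq> edges n"
    by (simp add: G_def)
  have inj_t: "inj_on t {..<n}"
    using gen by (simp add: generic_def)
  have inj_G: "inj_on (edge_point t) G"
    using inj_on_edge_point_edges[OF inj_t] G by (rule inj_on_subset)
  consider "card L = 0" | "card L = 1" | "card L = 2" | "card L = 3"
    using card by linarith
  then show ?thesis
  proof cases
    case 1
    then have "L = {}"
      using L finite_subset by fastforce
    then have "F = G"
      using F_eq by simp
    then have "\<not> collinear (edge_point t ` G)"
      using gen F G by (auto simp: generic_def)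
    then show ?thesis
      by (simp add: points \<open>L = {}\<close>)
  next
    case 2
    then obtain a e1 e2 where "L = {a}" "G = {e1, e2}" "e1 \<noteq> e2"
      using card by (auto simp: card_1_singleton_iff card_2_iff)
    then have "edge_point (t(n := x)) ` F = {pair_point x (t a), edge_point t e1, edge_point t e2}" for x
      by (auto simp: points)
    moreover have "edge_point t e1 \<noteq> edge_point t e2"
      using inj_G \<open>G = {e1, e2}\<close> \<open>e1 \<noteq> e2\<close> by (auto simp: inj_on_def)
    ultimately show ?thesis
      using finite_collinear_pair_point_1 by simp
  next
    case 3
    then obtain a c e where ace: "L = {a, c}" "a \<noteq> c" "G = {e}"
      using card by (auto simp: card_2_iff card_1_singleton_iff)
    then have "F = {(a, n), (c, n), e}"
      using F_eq by auto
    moreover have "edge_point (t(n := x)) ` F = {pair_point x (t a), pair_point x (t c), edge_point t e}" for x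
      using ace by (auto simp: points)
    ultimately show ?thesis
      using finite_collinear_two_new_edges[OF inj_t, of a c e] F(3) ace L G by auto
  next
    case 4
    then obtain a c e where "L = {a, c, e}" "a \<noteq> c" "c \<noteq> e" "a \<noteq> e"
      by (auto simp: card_3_iff)
    moreover have "G = {}"
      using card 4 finite_subset[OF G finite_edges] by simp
    ultimately show ?thesis
      using inj_t L not_collinear_pair_point_3 by (simp add: points inj_on_eq_iff)
  qed
qed

lemma generic_extend:
  assumes gen: "generic n t"
  shows "\<exists>x. generic (Suc n) (t(n := x))"
proof -
  define bad where
    "bad = (\<Union>F \<in> {F. F \<subseteq> edges (Suc n) \<and> card F = 3 \<and> \<not> triangle_edges F}.
              {x. collinear (edge_point (t(n := x)) ` F)})"
  have "finite {F. F \<subseteq> edges (Suc n) \<and> card F = 3 \<and> \<not> triangle_edges F}"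
    by (rule finite_subset[of _ "Pow (edges (Suc n))"]) (auto simp: finite_edges)
  then have "finite (bad \<union> t ` {..<n})"
    unfolding bad_def using finite_collinear_extensions[OF gen] by simp
  then obtain x where x: "x \<notin> bad \<union> t ` {..<n}"
    by (meson ex_new_if_finite infinite_UNIV_char_0)
  have "inj_on (t(n := x)) {..<Suc n}"
    using gen x by (auto simp: generic_def lessThan_Suc inj_on_fun_updI)
  moreover have "triangle_edges F"
    if "F \<subseteq> edges (Suc n)" "card F = 3" "collinear (edge_point (t(n := x)) ` F)" for F
    using that x by (auto simp: bad_def)
  ultimately show ?thesis
    by (auto simp: generic_def)
qed

lemma generic_sequence_exists: "\<exists>T. \<forall>n. generic n T"
  using generic_cong generic_0 generic_extend by (rule sequence_by_extension)

lemma generic_sequence_inj: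
  assumes "\<forall>n. generic n T"
  shows "inj T"
proof (rule injI)
  fix i j
  assume "T i = T j"
  moreover have "inj_on T {..<Suc (max i j)}"
    using assms by (simp add: generic_def)
  ultimately show "i = j"
    by (auto simp: inj_on_eq_iff)
qed

lemma generic_sequence_collinear_imp_triangle:
  assumes "\<forall>n. generic n T" and "F \<subseteq> {(a, b). a < b}" "card F = 3" "collinear (edge_point T ` F)"
  shows "triangle_edges F"
proof -
  have "finite F"
    using assms(3) card.infinite by fastforce
  then have "snd e \<le> Max (snd ` F)" if "e \<in> F" for e
    using that by simp
  then have "F \<subseteq> edges (Suc (Max (snd ` F)))"
    using assms(2) by (force simp: edges_def less_Suc_eq_le)
  then show ?thesis
    using assms by (auto simp: generic_def)
qed

lemma infinite_edge_points:
  assumes "inj T"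
  shows "infinite (edge_point T ` {(a, b). a < b})"
proof -
  have "infinite (range (\<lambda>b. (0, Suc b)))"
    by (rule range_inj_infinite) (simp add: inj_def)
  then have "infinite {(a, b). a < (b::nat)}"
    by (rule infinite_super[rotated]) auto
  moreover have "inj_on (edge_point T) {(a, b). a < b}"
    using inj_on_edge_point[OF assms] by simp
  ultimately show ?thesis
    using finite_imageD by blast
qed

lemma no_three_collinear_image:
  assumes "\<And>G. G \<subseteq> E \<Longrightarrow> card G = 3 \<Longrightarrow> \<not> collinear (f ` G)"
  shows "no_three_collinear (f ` E)"
  unfolding no_three_collinear_def
proof clarify
  fix a b c
  assume "a \<in> E" "b \<in> E" "c \<in> E" "f a \<noteq> f b" "f b \<noteq> f c" "f a \<noteq> f c"
    and "collinear {f a, f b, f c}"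
  moreover from this have "card {a, b, c} = 3"
    by (metis card_3_iff)
  ultimately show False
    using assms[of "{a, b, c}"] by simp
qed

lemma large_no_three_collinear_subset:
  assumes gen: "\<forall>n. generic n T"
    and P: "P \<subseteq> edge_point T ` {(a, b). a < b}" "finite P"
  shows "\<exists>P' \<subseteq> P. card P \<le> 2 * card P' \<and> no_three_collinear P'"
proof -
  define E where "E = {e \<in> {(a, b). a < b}. edge_point T e \<in> P}"
  have P_eq: "P = edge_point T ` E"
    using P(1) by (auto simp: E_def)
  have inj: "inj_on (edge_point T) E"
    using inj_on_edge_point[OF generic_sequence_inj[OF gen]] by (rule inj_on_subset) (auto simp: E_def)
  then have "finite E"
    using P(2) P_eq finite_image_iff by blast
  then obtain S where S: "card E \<le> 2 * card (cut_edges S E)"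
    using large_cut[of E] by (auto simp: E_def)
  have "no_three_collinear (edge_point T ` cut_edges S E)"
  proof (rule no_three_collinear_image)
    fix G
    assume G: "G \<subseteq> cut_edges S E" "card G = 3"
    show "\<not> collinear (edge_point T ` G)"
    proof
      assume "collinear (edge_point T ` G)"
      moreover have "G \<subseteq> {(a, b). a < b}"
        using G(1) by (auto simp: cut_edges_def E_def)
      ultimately have "triangle_edges G"
        using gen G(2) by (intro generic_sequence_collinear_imp_triangle)
      then show False
        using G(1) triangle_edges_not_subset_cut by blast
    qed
  qed
  moreover have "card (edge_point T ` cut_edges S E) = card (cut_edges S E)"
    using inj by (rule card_image[OF inj_on_subset]) (auto simp: cut_edges_def)
  moreover have "edge_point T ` cut_edges S E \<subseteq> P"
    by (auto simp: P_eq cut_edges_def)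
  ultimately show ?thesis
    using S card_image[OF inj] P_eq by auto
qed

lemma colour_class_with_collinear_triple:
  fixes c :: "real^2 \<Rightarrow> nat"
  assumes "inj T" and colour: "\<forall>x \<in> edge_point T ` {(a, b). a < b}. c x < m"
  shows "\<exists>i<m. \<not> no_three_collinear {x \<in> edge_point T ` {(a, b). a < b}. c x = i}"
proof -
  \<comment> \<open>colour the edge {x, y} by the colour of its point and apply Ramsey's theorem\<close>
  define f where "f X = c (edge_point T (Min X, Max X))" for X :: "nat set"
  have f: "f {x, y} = c (edge_point T (x, y))" if "x < y" for x y
    using that by (simp add: f_def)
  have "\<forall>x\<in>UNIV. \<forall>y\<in>UNIV. x \<noteq> y \<longrightarrow> f {x, y} < m"
    using colour by (auto simp: f_def min_def max_def)
  then obtain Y i where Y: "infinite Y" "i < m" "\<forall>x\<in>Y. \<forall>y\<in>Y. x \<noteq> y \<longrightarrow> f {x, y} = i"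
    using Ramsey2[where Z = "UNIV :: nat set" and f = f and s = m] by auto
  then obtain x y z where xyz: "x \<in> Y" "y \<in> Y" "z \<in> Y" "x < y" "y < z"
    by (metis ex_in_conv finite.emptyI infinite_nat_iff_unbounded)
  let ?C = "{p \<in> edge_point T ` {(a, b). a < b}. c p = i}"
  have "c (edge_point T (p, q)) = i" if "p \<in> Y" "q \<in> Y" "p < q" for p q
    using Y(3) f[OF \<open>p < q\<close>] that by force
  then have "edge_point T (x, y) \<in> ?C" "edge_point T (y, z) \<in> ?C" "edge_point T (x, z) \<in> ?C"
    using xyz by (auto intro: imageI)
  moreover have "collinear {edge_point T (x, y), edge_point T (y, z), edge_point T (x, z)}"
    by (simp add: edge_point_def collinear_pair_point_triangle)
  moreover have "inj_on (edge_point T) {(a, b). a < b}"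
    using inj_on_edge_point[OF \<open>inj T\<close>] by simp
  then have "edge_point T (x, y) \<noteq> edge_point T (y, z)" "edge_point T (y, z) \<noteq> edge_point T (x, z)"
    "edge_point T (x, y) \<noteq> edge_point T (x, z)"
    using xyz by (auto simp: inj_on_eq_iff)
  ultimately show ?thesis
    using Y(2) unfolding no_three_collinear_def by blast
qed

theorem theorem1p1:
  shows "\<exists>A :: (real^2) set. infinite A \<and>
    (\<forall>P. P \<subseteq> A \<and> finite P \<and> card P \<ge> 1 \<longrightarrow>
        (\<exists>P'. P' \<subseteq> P \<and> 2 * card P' \<ge> card P \<and> no_three_collinear P')) \<and>
    \<not> (\<exists>m::nat. \<exists>c :: real^2 \<Rightarrow> nat. (\<forall>x\<in>A. c x < m) \<and>
          (\<forall>i<m. no_three_collinear {x\<in>A. c x = i}))"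
proof -
  obtain T where gen: "\<forall>n. generic n T"
    using generic_sequence_exists by blast
  define A where "A = edge_point T ` {(a, b). a < b}"
  have "infinite A"
    using infinite_edge_points[OF generic_sequence_inj[OF gen]] by (simp add: A_def)
  moreover have "\<exists>P' \<subseteq> P. card P \<le> 2 * card P' \<and> no_three_collinear P'"
    if "P \<subseteq> A" "finite P" for P
    using large_no_three_collinear_subset[OF gen] that unfolding A_def .
  moreover have "\<exists>i<m. \<not> no_three_collinear {x \<in> A. c x = i}"
    if "\<forall>x\<in>A. c x < m" for m and c :: "real^2 \<Rightarrow> nat"
    using colour_class_with_collinear_triple[OF generic_sequence_inj[OF gen]] that unfolding A_def .
  ultimately show ?thesis
    by (intro exI[of _ A]) blast
qed

end
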